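(* Let $R$ be a noetherian ring over a field $k$ and let $\mathcal{J}_1,\mathcal{J}_2\subset \mathrm{Gr}_{\mathbb{Q}}(R)$ be two $\mathbb{Q}$-Rees algebras over $R$. The following are equivalent: (1) $\mathcal{J}_1$ and $\mathcal{J}_2$ are equivalent, i.e. the Rees algebras $\mathcal{J}_1\cap R[T]$ and $\mathcal{J}_2\cap R[T]$ have the same integral closure in $R[T]$; (2) for some $b\in\mathbb{Q}_{>0}$, the algebras $\mathcal{J}_1\cap R[T^{b}]$ and $\mathcal{J}_2\cap R[T^{b}]$ have the same integral closure in $R[T^{b}]$; (3) for every $b\in\mathbb{Q}_{>0}$, the algebras $\mathcal{J}_1\cap R[T^{b}]$ and $\mathcal{J}_2\cap R[T^{b}]$ have the same integral closure in $R[T^{b}]$.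
   Context: Let $\mathbb{Q}_{\geq 0}$ be the nonnegative rationals and $\mathrm{Gr}_{\mathbb{Q}}(R)=\bigoplus_{a\in\mathbb{Q}_{\geq0}}RT^{a}$ (so $\mathrm{Gr}_{\mathbb{Q}}(R)=\bigcup_{N\ge1}R[T^{1/N}]$). A $\mathbb{Q}$-Rees algebra over $R$ is a graded subalgebra $\mathcal{J}=\bigoplus_{a\in\mathbb{Q}_{\ge0}}J_aT^a\subset \mathrm{Gr}_{\mathbb{Q}}(R)$, where the $J_a$ are ideals of $R$, such that: $J_0=R$; $J_aJ_b\subset J_{a+b}$ for all $a,b$; $J_b\subset J_a$ whenever $a\le b$; and there exist $f_1,\dots,f_r\in R$ and $a_1,\dots,a_r\in\mathbb{Q}_{\ge0}$ with $f_i\in J_{a_i}$ such that for every $a\in\mathbb{Q}_{\ge0}$ the ideal $J_a$ is generated by $\{f_{i_1}\cdots f_{i_\ell}\mid a_{i_1}+\dots+a_{i_\ell}\ge a\}$. *)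

theory Defs
  imports Complex_Main "HOL-Library.Poly_Mapping" "HOL-Library.Multiset"
begin

definition is_ideal :: "'a::comm_ring_1 set \<Rightarrow> bool" where
  "is_ideal I \<longleftrightarrow> 0 \<in> I \<and> (\<forall>x\<in>I. \<forall>y\<in>I. x + y \<in> I) \<and> (\<forall>r. \<forall>x\<in>I. r * x \<in> I)"

definition ideal_gen :: "'a::comm_ring_1 set \<Rightarrow> 'a set" where
  "ideal_gen S = {\<Sum>s\<in>F. c s * s | F c. finite F \<and> F \<subseteq> S}"

definition noetherian :: "'a::comm_ring_1 itself \<Rightarrow> bool" where
  "noetherian _ \<longleftrightarrow> (\<forall>I::'a set. is_ideal I \<longrightarrow> (\<exists>F. finite F \<and> F \<subseteq> I \<and> I = ideal_gen F))"

(* unital ring homomorphism (makes R an algebra over a field k) *)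
definition ring_hom_tc :: "('k::field \<Rightarrow> 'a::comm_ring_1) \<Rightarrow> bool" where
  "ring_hom_tc \<phi> \<longleftrightarrow> \<phi> 1 = 1 \<and> (\<forall>x y. \<phi> (x + y) = \<phi> x + \<phi> y) \<and> (\<forall>x y. \<phi> (x * y) = \<phi> x * \<phi> y)"

(* Elements of Gr_Q(R) are finitely supported functions rat \<Rightarrow>\<^sub>0 R (coefficient of T^a
   at key a), with support in the nonnegative rationals; multiplication of rat \<Rightarrow>\<^sub>0 'a
   is convolution, i.e. T^a T^b = T^(a+b). *)
definition GrQ :: "(rat \<Rightarrow>\<^sub>0 'a::comm_ring_1) set" where
  "GrQ = {p. Poly_Mapping.keys p \<subseteq> {0..}}"

definition RT :: "rat \<Rightarrow> (rat \<Rightarrow>\<^sub>0 'a::comm_ring_1) set" where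
  "RT b = {p. \<forall>e\<in>Poly_Mapping.keys p. \<exists>n::nat. e = of_nat n * b}"

(* Q-Rees algebra given by its family of ideals J_a (a \<ge> 0) *)
definition is_QRees :: "(rat \<Rightarrow> 'a::comm_ring_1 set) \<Rightarrow> bool" where
  "is_QRees J \<longleftrightarrow>
     (\<forall>a\<ge>0. is_ideal (J a)) \<and>
     J 0 = UNIV \<and>
     (\<forall>a\<ge>0. \<forall>b\<ge>0. \<forall>x\<in>J a. \<forall>y\<in>J b. x * y \<in> J (a + b)) \<and>
     (\<forall>a\<ge>0. \<forall>b. a \<le> b \<longrightarrow> J b \<subseteq> J a) \<and>
     (\<exists>(r::nat) (f::nat \<Rightarrow> 'a) (w::nat \<Rightarrow> rat).
        (\<forall>i<r. w i \<ge> 0 \<and> f i \<in> J (w i)) \<and>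
        (\<forall>a\<ge>0. J a = ideal_gen
            {(\<Prod>i\<in>#M. f i) | M. set_mset M \<subseteq> {..<r} \<and> (\<Sum>i\<in>#M. w i) \<ge> a}))"

definition QRees_alg :: "(rat \<Rightarrow> 'a::comm_ring_1 set) \<Rightarrow> (rat \<Rightarrow>\<^sub>0 'a) set" where
  "QRees_alg J = {p \<in> GrQ. \<forall>a\<in>Poly_Mapping.keys p. Poly_Mapping.lookup p a \<in> J a}"

definition integral_over :: "'b::comm_ring_1 set \<Rightarrow> 'b \<Rightarrow> bool" where
  "integral_over A x \<longleftrightarrow> (\<exists>n c. (\<forall>i<n. c i \<in> A) \<and> x ^ n + (\<Sum>i<n. c i * x ^ i) = 0)"

definition integral_closure_in :: "'b::comm_ring_1 set \<Rightarrow> 'b set \<Rightarrow> 'b set" where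
  "integral_closure_in A S = {x \<in> S. integral_over A x}"

end

theory Submission
  imports Defs "Jordan_Normal_Form.Char_Poly"
begin

text \<open>For \<open>b > 0\<close>, an element of \<open>R[T\<^sup>b]\<close> that is integral over \<open>\<J>\<close> is already integral over
  \<open>\<J> \<inter> R[T\<^sup>b]\<close>: restricting an integral equation to the degrees in \<open>b\<nat>\<close> preserves it.
  So the integral closure at level \<open>b\<close> is \<open>R[T\<^sup>b]\<close> intersected with the integral closure of
  \<open>\<J>\<close> in \<open>Gr\<^sub>\<rat>(R)\<close>. If the closures of \<open>\<J>\<^sub>1\<close> and \<open>\<J>\<^sub>2\<close> agree at one level \<open>b\<close>, every homogeneous
  \<open>g T\<^sup>a \<in> \<J>\<^sub>1\<close> has a power of degree in \<open>b\<nat>\<close>; that power lies in the common closure at level \<open>b\<close>,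
  so \<open>g T\<^sup>a\<close> is integral over \<open>\<J>\<^sub>2\<close>. As integral elements form a ring (determinant trick),
  \<open>\<J>\<^sub>1\<close> is integral over \<open>\<J>\<^sub>2\<close> and vice versa, so the two integral closures in \<open>Gr\<^sub>\<rat>(R)\<close>
  coincide and the closures agree at every level.\<close>

section \<open>Integral elements over a subring\<close>

definition is_subring :: "'a::comm_ring_1 set \<Rightarrow> bool" where
  "is_subring A \<longleftrightarrow> 0 \<in> A \<and> 1 \<in> A \<and> (\<forall>x\<in>A. \<forall>y\<in>A. x + y \<in> A)
     \<and> (\<forall>x\<in>A. \<forall>y\<in>A. x * y \<in> A) \<and> (\<forall>x\<in>A. - x \<in> A)"

lemma is_subring_sum:
  "is_subring A \<Longrightarrow> (\<And>i. i \<in> I \<Longrightarrow> f i \<in> A) \<Longrightarrow> sum f I \<in> A"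
  by (induction I rule: infinite_finite_induct) (simp_all add: is_subring_def)

lemma is_subring_Int: "is_subring A \<Longrightarrow> is_subring B \<Longrightarrow> is_subring (A \<inter> B)"
  by (simp add: is_subring_def)

definition poly_over :: "'a::comm_ring_1 set \<Rightarrow> 'a poly \<Rightarrow> bool" where
  "poly_over A p \<longleftrightarrow> (\<forall>k. coeff p k \<in> A)"

lemma poly_over_const: "is_subring A \<Longrightarrow> a \<in> A \<Longrightarrow> poly_over A [:a:]"
  by (simp add: poly_over_def is_subring_def coeff_const)

lemma poly_over_X: "is_subring A \<Longrightarrow> poly_over A [:0, 1:]"
  by (auto simp: poly_over_def is_subring_def coeff_pCons split: nat.split)

lemma poly_over_add: "is_subring A \<Longrightarrow> poly_over A p \<Longrightarrow> poly_over A q \<Longrightarrow> poly_over A (p + q)"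
  by (simp add: poly_over_def is_subring_def)

lemma poly_over_mult:
  assumes "is_subring A" "poly_over A p" "poly_over A q"
  shows "poly_over A (p * q)"
  unfolding poly_over_def coeff_mult
  using assms by (auto intro!: is_subring_sum simp: poly_over_def is_subring_def)

lemma poly_over_sum:
  "is_subring A \<Longrightarrow> (\<And>i. i \<in> I \<Longrightarrow> poly_over A (f i)) \<Longrightarrow> poly_over A (sum f I)"
  by (induction I rule: infinite_finite_induct)
     (simp_all add: poly_over_def is_subring_def)

lemma poly_over_prod:
  "is_subring A \<Longrightarrow> (\<And>i. i \<in> I \<Longrightarrow> poly_over A (f i)) \<Longrightarrow> poly_over A (prod f I)"
proof (induction I rule: infinite_finite_induct)
  case (insert x F)
  then show ?case by (simp add: poly_over_mult)
qed (simp_all add: poly_over_def is_subring_def coeff_1)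

lemma poly_over_of_int: "is_subring A \<Longrightarrow> poly_over A (of_int z)"
proof -
  assume A: "is_subring A"
  have nat: "of_nat n \<in> A" for n
    by (induction n) (use A in \<open>simp_all add: is_subring_def\<close>)
  have "of_int z \<in> A"
    by (cases z rule: int_cases2) (use A nat in \<open>simp_all add: is_subring_def\<close>)
  then show ?thesis using poly_over_const[OF A] by (simp add: of_int_poly)
qed

lemma poly_over_char_poly:
  assumes A: "is_subring A" and M: "M \<in> carrier_mat n n"
    and entries: "\<And>i j. i < n \<Longrightarrow> j < n \<Longrightarrow> M $$ (i, j) \<in> A"
  shows "poly_over A (char_poly M)"
proof -
  have entry: "poly_over A (char_poly_matrix M $$ (i, j))" if "i < n" "j < n" for i j
  proof -
    have "char_poly_matrix M $$ (i, j) = (if i = j then [:0, 1:] else 0) + [:- M $$ (i, j):]"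
      using M that by (simp add: char_poly_matrix_def)
    moreover have "- M $$ (i, j) \<in> A" using A entries[OF that] by (simp add: is_subring_def)
    ultimately show ?thesis
      using poly_over_add[OF A] poly_over_X[OF A] poly_over_const[OF A] A
      by (simp add: poly_over_def is_subring_def)
  qed
  show ?thesis
    unfolding char_poly_def det_def'[OF char_poly_matrix_closed[OF M]]
  proof (intro poly_over_sum[OF A] poly_over_mult[OF A] poly_over_of_int[OF A] poly_over_prod[OF A])
    fix p i assume "p \<in> {p. p permutes {0..<n}}" "i \<in> {0..<n}"
    then show "poly_over A (char_poly_matrix M $$ (i, p i))"
      using entry permutes_in_image by fastforce
  qed
qed

inductive_set span_over :: "'a::comm_ring_1 set \<Rightarrow> 'a set \<Rightarrow> 'a set" for A V where
  zero: "0 \<in> span_over A V"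
| scale: "a \<in> A \<Longrightarrow> v \<in> V \<Longrightarrow> a * v \<in> span_over A V"
| add: "x \<in> span_over A V \<Longrightarrow> y \<in> span_over A V \<Longrightarrow> x + y \<in> span_over A V"

lemma span_over_base: "is_subring A \<Longrightarrow> v \<in> V \<Longrightarrow> v \<in> span_over A V"
  using span_over.scale[of 1 A v V] by (simp add: is_subring_def)

lemma span_over_mono:
  assumes "V \<subseteq> W"
  shows "x \<in> span_over A V \<Longrightarrow> x \<in> span_over A W"
  by (induction rule: span_over.induct) (use assms in \<open>auto intro: span_over.intros\<close>)

lemma span_over_scale:
  assumes "is_subring A" "a \<in> A"
  shows "x \<in> span_over A V \<Longrightarrow> a * x \<in> span_over A V"
proof (induction rule: span_over.induct)
  case (scale b v)
  then have "(a * b) * v \<in> span_over A V"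
    using assms by (intro span_over.scale) (simp_all add: is_subring_def)
  then show ?case by (simp add: mult.assoc)
qed (simp_all add: distrib_left span_over.intros)

lemma span_over_uminus: "is_subring A \<Longrightarrow> x \<in> span_over A V \<Longrightarrow> - x \<in> span_over A V"
  using span_over_scale[of A "- 1" x V] by (simp add: is_subring_def)

lemma span_over_sum:
  "(\<And>i. i \<in> I \<Longrightarrow> f i \<in> span_over A V) \<Longrightarrow> sum f I \<in> span_over A V"
  by (induction I rule: infinite_finite_induct) (simp_all add: span_over.intros)

lemma span_over_mult_right:
  "x \<in> span_over A V \<Longrightarrow> x * z \<in> span_over A ((\<lambda>v. v * z) ` V)"
  by (induction rule: span_over.induct)
     (auto simp: distrib_right mult.assoc intro: span_over.intros)

lemma span_over_mult_closed:
  assumes A: "is_subring A" and gens: "\<And>u v. u \<in> V \<Longrightarrow> v \<in> V \<Longrightarrow> u * v \<in> span_over A V"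
    and x: "x \<in> span_over A V" and y: "y \<in> span_over A V"
  shows "x * y \<in> span_over A V"
proof -
  have gen_left: "u * y \<in> span_over A V" if "u \<in> V" for u
    using y
  proof (induction rule: span_over.induct)
    case (scale a v)
    then show ?case
      using span_over_scale[OF A scale(1) gens[OF that scale(2)]] by (simp add: algebra_simps)
  qed (simp_all add: distrib_left span_over.intros)
  from x show ?thesis
  proof (induction rule: span_over.induct)
    case (scale a v)
    then show ?case
      using span_over_scale[OF A scale(1) gen_left[OF scale(2)]] by (simp add: mult.assoc)
  qed (simp_all add: distrib_right span_over.intros)
qed

lemma span_over_finite_repr:
  assumes A: "is_subring A" and V: "finite V"
  shows "x \<in> span_over A V \<Longrightarrow> \<exists>c. (\<forall>v. c v \<in> A) \<and> x = (\<Sum>v\<in>V. c v * v)"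
proof (induction rule: span_over.induct)
  case zero
  show ?case using A by (intro exI[of _ "\<lambda>_. 0"]) (simp add: is_subring_def)
next
  case (scale a v)
  have "(\<Sum>w\<in>V. (if w = v then a else 0) * w) = (\<Sum>w\<in>V. if w = v then a * w else 0)"
    by (rule sum.cong) auto
  also have "\<dots> = a * v" using scale V by (simp add: sum.delta')
  finally show ?case using A scale by (intro exI[of _ "\<lambda>w. if w = v then a else 0"]) (simp add: is_subring_def)
next
  case (add x y)
  then obtain c d where "\<forall>v. c v \<in> A" "x = (\<Sum>v\<in>V. c v * v)" "\<forall>v. d v \<in> A" "y = (\<Sum>v\<in>V. d v * v)"
    by blast
  then show ?case
    using A by (intro exI[of _ "\<lambda>v. c v + d v"]) (simp add: is_subring_def distrib_right sum.distrib)
qed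

definition finite_algebra_over :: "'a::comm_ring_1 set \<Rightarrow> 'a set \<Rightarrow> bool" where
  "finite_algebra_over A V \<longleftrightarrow> finite V \<and> 1 \<in> span_over A V
     \<and> (\<forall>x\<in>span_over A V. \<forall>y\<in>span_over A V. x * y \<in> span_over A V)"

lemma integral_over_root_of_monic:
  assumes "poly_over A p" "lead_coeff p = 1" "poly p x = 0"
  shows "integral_over A x"
proof -
  have "poly p x = (\<Sum>i<Suc (degree p). coeff p i * x ^ i)"
    by (simp add: poly_altdef lessThan_Suc_atMost)
  also have "\<dots> = x ^ degree p + (\<Sum>i<degree p. coeff p i * x ^ i)"
    using assms(2) by simp
  finally show ?thesis
    using assms unfolding integral_over_def poly_over_def
    by (intro exI[of _ "degree p"] exI[of _ "coeff p"]) auto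
qed

lemma det_mult_kernel_vec:
  fixes N :: "'a::comm_ring_1 mat"
  assumes N: "N \<in> carrier_mat n n" and v: "v \<in> carrier_vec n"
    and Nv: "N *\<^sub>v v = 0\<^sub>v n" and i: "i < n"
  shows "det N * v $ i = 0"
proof -
  have "(adj_mat N * N) *\<^sub>v v = adj_mat N *\<^sub>v (N *\<^sub>v v)"
    by (rule assoc_mult_mat_vec[OF adj_mat(1)[OF N] N v])
  also have "\<dots> = 0\<^sub>v n"
    unfolding Nv using adj_mat(1)[OF N] by (intro eq_vecI) (auto simp: scalar_prod_def)
  finally have "((det N \<cdot>\<^sub>m 1\<^sub>m n) *\<^sub>v v) $ i = 0"
    using adj_mat(3)[OF N] i by simp
  moreover have "((det N \<cdot>\<^sub>m 1\<^sub>m n) *\<^sub>v v) $ i = (\<Sum>j = 0..<n. det N * (if j = i then 1 else 0) * v $ j)"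
    using i v by (simp add: scalar_prod_def)
  moreover have "\<dots> = (\<Sum>j = 0..<n. if j = i then det N * v $ j else 0)"
    by (rule sum.cong) auto
  ultimately show ?thesis using i by simp
qed

text \<open>The determinant trick: multiplication by \<open>x\<close> on the finite generating set gives a matrix
  \<open>M\<close> over \<open>A\<close> with \<open>(x \<cdot> 1 - M) v = 0\<close>; as \<open>1\<close> lies in the span of \<open>v\<close>, the characteristic
  polynomial of \<open>M\<close> vanishes at \<open>x\<close>.\<close>

lemma integral_over_if_in_finite_algebra:
  assumes A: "is_subring A" and V: "finite_algebra_over A V" and x: "x \<in> span_over A V"
  shows "integral_over A x"
proof -
  have fin: "finite V" using V by (simp add: finite_algebra_over_def)
  obtain vs where vs: "set vs = V" "distinct vs" using finite_distinct_list[OF fin] by blast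
  define n where "n = length vs"
  have reindex: "(\<Sum>v\<in>V. f v) = (\<Sum>j<n. f (vs ! j))" for f :: "'a \<Rightarrow> 'a"
    using sum.reindex_bij_betw[OF bij_betw_nth[of vs "{..<n}" V], of f] vs by (simp add: n_def)
  have "\<exists>c. (\<forall>v. c v \<in> A) \<and> x * vs ! i = (\<Sum>v\<in>V. c v * v)" if "i < n" for i
  proof -
    have "vs ! i \<in> span_over A V" using span_over_base[OF A] that vs by (auto simp: n_def)
    then have "x * vs ! i \<in> span_over A V" using V x by (simp add: finite_algebra_over_def)
    then show ?thesis using span_over_finite_repr[OF A fin] by blast
  qed
  then obtain C where C_in: "\<And>i v. i < n \<Longrightarrow> C i v \<in> A"
    and C: "\<And>i. i < n \<Longrightarrow> x * vs ! i = (\<Sum>v\<in>V. C i v * v)"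
    by metis
  define M where "M = mat n n (\<lambda>(i, j). C i (vs ! j))"
  define N where "N = mat n n (\<lambda>(i, j). (if i = j then x else 0) - C i (vs ! j))"
  define w where "w = vec n (\<lambda>j. vs ! j)"
  have M: "M \<in> carrier_mat n n" and N: "N \<in> carrier_mat n n" and w: "w \<in> carrier_vec n"
    by (auto simp: M_def N_def w_def)
  have Nw: "N *\<^sub>v w = 0\<^sub>v n"
  proof (rule eq_vecI)
    fix i assume "i < dim_vec (0\<^sub>v n :: 'a vec)"
    then have i: "i < n" by simp
    have "(N *\<^sub>v w) $ i = (\<Sum>j<n. (if i = j then x * vs ! j else 0) - C i (vs ! j) * vs ! j)"
      using i by (auto simp: N_def w_def scalar_prod_def lessThan_atLeast0 left_diff_distrib
          intro: sum.cong)
    also have "\<dots> = x * vs ! i - (\<Sum>v\<in>V. C i v * v)"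
      using i by (simp add: sum_subtractf reindex)
    finally show "(N *\<^sub>v w) $ i = 0\<^sub>v n $ i" using C[OF i] i by simp
  qed (simp add: N_def)
  obtain e where e: "\<forall>v. e v \<in> A" "1 = (\<Sum>v\<in>V. e v * v)"
    using span_over_finite_repr[OF A fin, of 1] V unfolding finite_algebra_over_def by metis
  have "det N = det N * (\<Sum>v\<in>V. e v * v)"
    by (simp flip: e(2))
  also have "\<dots> = (\<Sum>j<n. e (vs ! j) * (det N * vs ! j))"
    by (simp add: reindex sum_distrib_left algebra_simps)
  also have "\<dots> = 0"
    using det_mult_kernel_vec[OF N w Nw] by (simp add: w_def)
  finally have det0: "det N = 0" .
  have "poly (char_poly M) x = det N"
    unfolding char_poly_def
  proof (rule poly_det_cong[OF N char_poly_matrix_closed[OF M]])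
    fix i j assume "i < n" "j < n"
    then show "poly (char_poly_matrix M $$ (i, j)) x = N $$ (i, j)"
      using M by (simp add: char_poly_matrix_def N_def M_def)
  qed
  moreover have "poly_over A (char_poly M)"
    by (rule poly_over_char_poly[OF A M]) (simp add: M_def C_in)
  ultimately show ?thesis
    using integral_over_root_of_monic degree_monic_char_poly[OF M] det0 by metis
qed

lemma finite_algebra_over_adjoin:
  assumes A: "is_subring A" and V: "finite_algebra_over A V"
    and c: "\<And>i. i < n \<Longrightarrow> c i \<in> span_over A V"
    and y: "y ^ n + (\<Sum>i<n. c i * y ^ i) = 0"
  shows "\<exists>W. finite_algebra_over A W \<and> span_over A V \<subseteq> span_over A W \<and> y \<in> span_over A W"
proof -
  define W where "W = (\<lambda>(v, j). v * y ^ j) ` (V \<times> {..<n})"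
  have mult_V: "x * z \<in> span_over A V" if "x \<in> span_over A V" "z \<in> span_over A V" for x z
    using V that by (simp add: finite_algebra_over_def)
  have yn: "y ^ n = - (\<Sum>i<n. c i * y ^ i)"
    using y by (simp add: eq_neg_iff_add_eq_0)
  have pow: "m * y ^ k \<in> span_over A W" if "m \<in> span_over A V" for m k
    using that
  proof (induction k arbitrary: m rule: less_induct)
    case (less k)
    show ?case
    proof (cases "k < n")
      case True
      have "(\<lambda>v. v * y ^ k) ` V \<subseteq> W" using True by (auto simp: W_def)
      then show ?thesis using span_over_mult_right[OF less.prems] span_over_mono by blast
    next
      case False
      have "m * y ^ k = m * y ^ (k - n) * y ^ n"
        using False by (simp add: mult.assoc flip: power_add)
      also have "\<dots> = - (\<Sum>i<n. (m * c i) * y ^ (k - n + i))"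
        by (simp add: yn sum_distrib_left power_add algebra_simps)
      finally show ?thesis
        using False less.IH mult_V[OF less.prems c]
        by (auto intro!: span_over_uminus[OF A] span_over_sum)
    qed
  qed
  have one: "1 \<in> span_over A V" using V by (simp add: finite_algebra_over_def)
  have "finite_algebra_over A W"
    unfolding finite_algebra_over_def
  proof (intro conjI ballI)
    show "finite W" using V by (simp add: W_def finite_algebra_over_def)
    show "1 \<in> span_over A W" using pow[OF one, of 0] by simp
    have "u * u' \<in> span_over A W" if gens: "u \<in> W" "u' \<in> W" for u u'
    proof -
      obtain v i v' j where "v \<in> V" "v' \<in> V" "u = v * y ^ i" "u' = v' * y ^ j"
        using gens by (auto simp: W_def)
      moreover have "v * v' \<in> span_over A V" using calculation mult_V span_over_base[OF A] by blast
      ultimately show ?thesis using pow[of "v * v'" "i + j"] by (simp add: power_add algebra_simps)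
    qed
    then show "x * z \<in> span_over A W" if "x \<in> span_over A W" "z \<in> span_over A W" for x z
      using span_over_mult_closed[OF A] that by blast
  qed
  moreover have "span_over A V \<subseteq> span_over A W" using pow[of _ 0] by auto
  moreover have "y \<in> span_over A W" using pow[OF one, of 1] by simp
  ultimately show ?thesis by blast
qed

lemma integral_over_mono: "A \<subseteq> B \<Longrightarrow> integral_over A x \<Longrightarrow> integral_over B x"
  unfolding integral_over_def by blast

lemma integral_over_mem: "is_subring A \<Longrightarrow> x \<in> A \<Longrightarrow> integral_over A x"
  unfolding integral_over_def
  by (intro exI[of _ 1] exI[of _ "\<lambda>_. - x"]) (auto simp: is_subring_def)

lemma finite_algebra_over_one: "is_subring A \<Longrightarrow> finite_algebra_over A {1}"
proof -
  assume A: "is_subring A"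
  have "span_over A {1} \<subseteq> A"
  proof
    fix x assume "x \<in> span_over A {1}"
    then show "x \<in> A" by (induction rule: span_over.induct) (use A in \<open>auto simp: is_subring_def\<close>)
  qed
  moreover have "A \<subseteq> span_over A {1}" using span_over.scale[of _ A 1 "{1}"] by force
  ultimately show ?thesis using A by (auto simp: finite_algebra_over_def is_subring_def)
qed

lemma finite_algebra_over_containing:
  assumes A: "is_subring A" and S: "finite S" "\<And>s. s \<in> S \<Longrightarrow> integral_over A s"
  shows "\<exists>V. finite_algebra_over A V \<and> S \<subseteq> span_over A V"
  using S
proof (induction S rule: finite_induct)
  case empty
  then show ?case using finite_algebra_over_one[OF A] by blast
next
  case (insert s S)
  then obtain V where V: "finite_algebra_over A V" "S \<subseteq> span_over A V" by auto
  have "a \<in> span_over A V" if "a \<in> A" for a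
    using span_over_scale[OF A that, of 1] V by (simp add: finite_algebra_over_def)
  moreover obtain n c where "\<forall>i<n. c i \<in> A" "s ^ n + (\<Sum>i<n. c i * s ^ i) = 0"
    using insert.prems unfolding integral_over_def by blast
  ultimately obtain W where "finite_algebra_over A W" "span_over A V \<subseteq> span_over A W" "s \<in> span_over A W"
    using finite_algebra_over_adjoin[OF A V(1)] by metis
  then show ?case using V by blast
qed

lemma integral_over_add:
  assumes A: "is_subring A" and "integral_over A x" "integral_over A y"
  shows "integral_over A (x + y)"
proof -
  obtain V where "finite_algebra_over A V" "{x, y} \<subseteq> span_over A V"
    using finite_algebra_over_containing[OF A, of "{x, y}"] assms by auto
  then show ?thesis using integral_over_if_in_finite_algebra[OF A] span_over.add by blast
qed

lemma integral_over_sum: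
  "is_subring A \<Longrightarrow> (\<And>i. i \<in> I \<Longrightarrow> integral_over A (f i)) \<Longrightarrow> integral_over A (sum f I)"
  by (induction I rule: infinite_finite_induct)
     (simp_all add: integral_over_add integral_over_mem is_subring_def)

lemma integral_over_trans:
  assumes A: "is_subring A" and x: "integral_over B x" and B: "\<And>b. b \<in> B \<Longrightarrow> integral_over A b"
  shows "integral_over A x"
proof -
  obtain n c where c: "\<forall>i<n. c i \<in> B" and x: "x ^ n + (\<Sum>i<n. c i * x ^ i) = 0"
    using x unfolding integral_over_def by blast
  obtain V where V: "finite_algebra_over A V" "c ` {..<n} \<subseteq> span_over A V"
    using finite_algebra_over_containing[OF A, of "c ` {..<n}"] c B by auto
  then obtain W where "finite_algebra_over A W" "x \<in> span_over A W"
    using finite_algebra_over_adjoin[OF A V(1) _ x] by blast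
  then show ?thesis using integral_over_if_in_finite_algebra[OF A] by blast
qed

lemma integral_over_of_power:
  assumes A: "0 \<in> A" and m: "m \<ge> 1" and y: "integral_over A (y ^ m)"
  shows "integral_over A y"
proof -
  obtain n c where c: "\<forall>i<n. c i \<in> A" and eq: "(y ^ m) ^ n + (\<Sum>i<n. c i * (y ^ m) ^ i) = 0"
    using y unfolding integral_over_def by blast
  define d where "d k = (if m dvd k then c (k div m) else 0)" for k
  have "(\<Sum>k<m * n. d k * y ^ k) = (\<Sum>k\<in>(\<lambda>i. m * i) ` {..<n}. d k * y ^ k)"
    using m by (intro sum.mono_neutral_right) (auto simp: d_def)
  also have "\<dots> = (\<Sum>i<n. c i * (y ^ m) ^ i)"
    using m by (subst sum.reindex) (auto simp: inj_on_def d_def power_mult)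
  finally have "y ^ (m * n) + (\<Sum>k<m * n. d k * y ^ k) = 0"
    using eq by (simp add: power_mult)
  moreover have "\<forall>k<m * n. d k \<in> A" using c A m by (auto simp: d_def dvd_def)
  ultimately show ?thesis unfolding integral_over_def by blast
qed


section \<open>\<open>\<rat>\<close>-Rees algebras\<close>

lemma poly_mapping_sum_single:
  "p = (\<Sum>k\<in>Poly_Mapping.keys p. Poly_Mapping.single k (Poly_Mapping.lookup p k))"
proof (rule poly_mapping_eqI)
  fix k'
  have "Poly_Mapping.lookup (\<Sum>k\<in>Poly_Mapping.keys p. Poly_Mapping.single k (Poly_Mapping.lookup p k)) k'
      = (\<Sum>k\<in>Poly_Mapping.keys p. if k = k' then Poly_Mapping.lookup p k else 0)"
    by (simp add: lookup_sum lookup_single when_def)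
  also have "\<dots> = Poly_Mapping.lookup p k'"
    by (simp add: sum.delta in_keys_iff)
  finally show "Poly_Mapping.lookup p k' = Poly_Mapping.lookup (\<Sum>k\<in>Poly_Mapping.keys p.
      Poly_Mapping.single k (Poly_Mapping.lookup p k)) k'" by simp
qed

lemma single_power: "Poly_Mapping.single k (g::'a::comm_ring_1) ^ m = Poly_Mapping.single (of_nat m * k) (g ^ m)"
  by (induction m) (simp_all add: mult_single distrib_right)

context
  fixes J :: "rat \<Rightarrow> 'a::comm_ring_1 set"
  assumes J: "is_QRees J"
begin

lemma QRees_zero: "a \<ge> 0 \<Longrightarrow> 0 \<in> J a"
  and QRees_add: "a \<ge> 0 \<Longrightarrow> x \<in> J a \<Longrightarrow> y \<in> J a \<Longrightarrow> x + y \<in> J a"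
  and QRees_uminus: "a \<ge> 0 \<Longrightarrow> x \<in> J a \<Longrightarrow> - x \<in> J a"
  using J unfolding is_QRees_def is_ideal_def by (metis mult_minus1)+

lemma QRees_mult: "a \<ge> 0 \<Longrightarrow> b \<ge> 0 \<Longrightarrow> x \<in> J a \<Longrightarrow> y \<in> J b \<Longrightarrow> x * y \<in> J (a + b)"
  using J by (simp add: is_QRees_def)

lemma QRees_power: "a \<ge> 0 \<Longrightarrow> x \<in> J a \<Longrightarrow> x ^ m \<in> J (of_nat m * a)"
proof (induction m)
  case 0
  then show ?case using J by (simp add: is_QRees_def)
next
  case (Suc m)
  then have "x * x ^ m \<in> J (a + of_nat m * a)" by (simp add: QRees_mult)
  then show ?case by (simp add: distrib_right add.commute)
qed

lemma QRees_alg_iff: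
  "p \<in> QRees_alg J \<longleftrightarrow> (\<forall>k\<in>Poly_Mapping.keys p. 0 \<le> k \<and> Poly_Mapping.lookup p k \<in> J k)"
  by (auto simp: QRees_alg_def GrQ_def)

lemma lookup_QRees_alg: "p \<in> QRees_alg J \<Longrightarrow> 0 \<le> k \<Longrightarrow> Poly_Mapping.lookup p k \<in> J k"
  by (cases "k \<in> Poly_Mapping.keys p") (auto simp: QRees_alg_iff in_keys_iff QRees_zero)

lemma single_in_QRees_alg: "a \<ge> 0 \<Longrightarrow> g \<in> J a \<Longrightarrow> Poly_Mapping.single a g \<in> QRees_alg J"
  by (simp add: QRees_alg_iff)

lemma QRees_alg_add:
  assumes p: "p \<in> QRees_alg J" and q: "q \<in> QRees_alg J"
  shows "p + q \<in> QRees_alg J"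
  unfolding QRees_alg_iff
proof
  fix k assume "k \<in> Poly_Mapping.keys (p + q)"
  then have "0 \<le> k" using keys_add[of p q] p q by (auto simp: QRees_alg_iff)
  then show "0 \<le> k \<and> Poly_Mapping.lookup (p + q) k \<in> J k"
    using lookup_QRees_alg[OF p] lookup_QRees_alg[OF q] by (simp add: lookup_add QRees_add)
qed

lemma QRees_alg_sum: "(\<And>i. i \<in> I \<Longrightarrow> f i \<in> QRees_alg J) \<Longrightarrow> sum f I \<in> QRees_alg J"
proof (induction I rule: infinite_finite_induct)
  case (insert x F)
  then show ?case by (simp add: QRees_alg_add)
qed (simp_all add: QRees_alg_iff)

lemma QRees_alg_mult:
  assumes p: "p \<in> QRees_alg J" and q: "q \<in> QRees_alg J"
  shows "p * q \<in> QRees_alg J"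
proof -
  have "p * q = (\<Sum>k\<in>Poly_Mapping.keys p. \<Sum>l\<in>Poly_Mapping.keys q.
      Poly_Mapping.single (k + l) (Poly_Mapping.lookup p k * Poly_Mapping.lookup q l))"
    by (subst poly_mapping_sum_single[of p], subst poly_mapping_sum_single[of q])
       (simp only: sum_product mult_single)
  also have "\<dots> \<in> QRees_alg J"
    using p q by (intro QRees_alg_sum single_in_QRees_alg) (auto simp: QRees_alg_iff QRees_mult)
  finally show ?thesis .
qed

lemma is_subring_QRees_alg: "is_subring (QRees_alg J)"
proof -
  have "1 \<in> QRees_alg J" using single_in_QRees_alg[of 0 1] J by (simp add: is_QRees_def)
  moreover have "- p \<in> QRees_alg J" if "p \<in> QRees_alg J" for p
    using that by (simp add: QRees_alg_iff QRees_uminus)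
  moreover have "0 \<in> QRees_alg J" by (simp add: QRees_alg_iff)
  ultimately show ?thesis
    unfolding is_subring_def using QRees_alg_add QRees_alg_mult by blast
qed

end

section \<open>Restriction to \<open>R[T\<^sup>b]\<close>\<close>

definition nat_multiples :: "rat \<Rightarrow> rat set" where
  "nat_multiples b = {of_nat n * b | n. True}"

lemma RT_iff_keys: "p \<in> RT b \<longleftrightarrow> Poly_Mapping.keys p \<subseteq> nat_multiples b"
  by (auto simp: RT_def nat_multiples_def)

lemma nat_multiples_add: "x \<in> nat_multiples b \<Longrightarrow> y \<in> nat_multiples b \<Longrightarrow> x + y \<in> nat_multiples b"
  by (auto simp: nat_multiples_def distrib_right intro: exI[of _ "_ + _"])

lemma nat_multiples_diff:
  assumes b: "b > 0" and k: "k \<ge> 0" and l: "l \<in> nat_multiples b" and kl: "k + l \<in> nat_multiples b"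
  shows "k \<in> nat_multiples b"
proof -
  obtain n m :: nat where n: "l = of_nat n * b" and m: "k + l = of_nat m * b"
    using l kl by (auto simp: nat_multiples_def)
  then have k_eq: "k = (of_nat m - of_nat n) * b" by (simp add: algebra_simps)
  with k b have "n \<le> m" by (simp add: zero_le_mult_iff)
  with k_eq have "k = of_nat (m - n) * b" by (simp add: of_nat_diff)
  then show ?thesis by (auto simp: nat_multiples_def)
qed

lemma nat_multiple_exists:
  assumes b: "b > 0" and k: "k \<ge> 0"
  shows "\<exists>m::nat. m \<ge> 1 \<and> of_nat m * k \<in> nat_multiples b"
proof -
  obtain p q where pq: "quotient_of (k / b) = (p, q)" by fastforce
  have q: "q > 0" and kb: "k / b = of_int p / of_int q"
    using quotient_of_denom_pos[OF pq] quotient_of_div[OF pq] by auto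
  have "of_int p / of_int q \<ge> (0::rat)" using k b by (simp flip: kb)
  then have p: "p \<ge> 0" using q by (simp add: zero_le_divide_iff)
  have "of_nat (nat q) * k = of_nat (nat p) * b"
    using kb b q p by (simp add: field_simps)
  then show ?thesis using q by (intro exI[of _ "nat q"]) (auto simp: nat_multiples_def)
qed

lemma RT_add: "p \<in> RT b \<Longrightarrow> q \<in> RT b \<Longrightarrow> p + q \<in> RT b"
  using keys_add[of p q] by (auto simp: RT_iff_keys)

lemma RT_mult:
  assumes "p \<in> RT b" "q \<in> RT b"
  shows "p * q \<in> RT b"
  unfolding RT_iff_keys
proof
  fix e assume "e \<in> Poly_Mapping.keys (p * q)"
  then obtain k l where "k \<in> Poly_Mapping.keys p" "l \<in> Poly_Mapping.keys q" "e = k + l"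
    using keys_mult[of p q] by blast
  then show "e \<in> nat_multiples b" using assms by (auto simp: RT_iff_keys intro!: nat_multiples_add)
qed

lemma RT_one: "1 \<in> RT b"
  by (auto simp: RT_iff_keys nat_multiples_def intro: exI[of _ 0])

lemma RT_power: "p \<in> RT b \<Longrightarrow> p ^ n \<in> RT b"
  by (induction n) (simp_all add: RT_one RT_mult)

lemma is_subring_RT: "is_subring (RT b :: (rat \<Rightarrow>\<^sub>0 'a::comm_ring_1) set)"
proof -
  have "0 \<in> RT b" "\<And>p. p \<in> RT b \<Longrightarrow> - p \<in> RT b" by (simp_all add: RT_iff_keys)
  then show ?thesis unfolding is_subring_def using RT_add RT_mult RT_one by blast
qed

definition restrict_keys :: "'b set \<Rightarrow> ('b \<Rightarrow>\<^sub>0 'a::zero) \<Rightarrow> 'b \<Rightarrow>\<^sub>0 'a" where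
  "restrict_keys S p = Abs_poly_mapping (\<lambda>k. if k \<in> S then Poly_Mapping.lookup p k else 0)"

lemma lookup_restrict_keys:
  "Poly_Mapping.lookup (restrict_keys S p) k = (if k \<in> S then Poly_Mapping.lookup p k else 0)"
proof -
  have "finite {k. (if k \<in> S then Poly_Mapping.lookup p k else 0) \<noteq> 0}"
    by (rule finite_subset[of _ "Poly_Mapping.keys p"]) (auto simp: in_keys_iff split: if_splits)
  then show ?thesis by (simp add: restrict_keys_def)
qed

lemma keys_restrict_keys: "Poly_Mapping.keys (restrict_keys S p) = Poly_Mapping.keys p \<inter> S"
  by (auto simp: in_keys_iff lookup_restrict_keys split: if_splits)

lemma restrict_keys_add: "restrict_keys S (p + q) = restrict_keys S p + restrict_keys S q"
  by (rule poly_mapping_eqI) (simp add: lookup_restrict_keys lookup_add)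

lemma restrict_keys_sum: "restrict_keys S (sum f I) = (\<Sum>i\<in>I. restrict_keys S (f i))"
proof (induction I rule: infinite_finite_induct)
  case (insert x F)
  then show ?case by (simp add: restrict_keys_add)
qed (simp_all, (rule poly_mapping_eqI, simp add: lookup_restrict_keys)+)

lemma restrict_keys_id: "Poly_Mapping.keys p \<subseteq> S \<Longrightarrow> restrict_keys S p = p"
  by (rule poly_mapping_eqI) (auto simp: lookup_restrict_keys in_keys_iff)

lemma restrict_keys_eq_0: "Poly_Mapping.keys p \<inter> S = {} \<Longrightarrow> restrict_keys S p = 0"
  by (rule poly_mapping_eqI) (auto simp: lookup_restrict_keys in_keys_iff)

text \<open>Restriction to the degrees in \<open>b\<nat>\<close> is \<open>R[T\<^sup>b]\<close>-linear on elements of nonnegative degrees: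
  a nonnegative degree outside \<open>b\<nat>\<close> stays outside \<open>b\<nat>\<close> after adding an element of \<open>b\<nat>\<close>.\<close>

lemma restrict_keys_mult_RT:
  assumes b: "b > 0" and c: "Poly_Mapping.keys c \<subseteq> {0..}" and x: "x \<in> RT b"
  shows "restrict_keys (nat_multiples b) (c * x) = restrict_keys (nat_multiples b) c * x"
proof -
  define r where "r = c - restrict_keys (nat_multiples b) c"
  have r_keys: "Poly_Mapping.keys r \<subseteq> Poly_Mapping.keys c - nat_multiples b"
    by (auto simp: r_def in_keys_iff lookup_restrict_keys lookup_minus split: if_splits)
  have "Poly_Mapping.keys (r * x) \<inter> nat_multiples b = {}"
  proof (rule ccontr)
    assume "Poly_Mapping.keys (r * x) \<inter> nat_multiples b \<noteq> {}"
    then obtain k l where "k \<in> Poly_Mapping.keys r" "l \<in> Poly_Mapping.keys x"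
      "k + l \<in> nat_multiples b"
      using keys_mult[of r x] by blast
    moreover from this have "k \<ge> 0" "k \<notin> nat_multiples b" "l \<in> nat_multiples b"
      using r_keys c x by (auto simp: RT_iff_keys)
    ultimately show False using nat_multiples_diff[OF b] by blast
  qed
  moreover have "restrict_keys (nat_multiples b) c * x \<in> RT b"
    using RT_mult[OF _ x] by (simp add: RT_iff_keys keys_restrict_keys)
  moreover have "c * x = restrict_keys (nat_multiples b) c * x + r * x"
    by (simp add: r_def algebra_simps)
  ultimately show ?thesis
    by (simp add: restrict_keys_add restrict_keys_eq_0 restrict_keys_id RT_iff_keys)
qed

lemma restrict_keys_QRees_alg:
  assumes J: "is_QRees J" and c: "c \<in> QRees_alg J"
  shows "restrict_keys (nat_multiples b) c \<in> QRees_alg J \<inter> RT b"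
  using c by (auto simp: QRees_alg_iff[OF J] RT_iff_keys keys_restrict_keys lookup_restrict_keys)

lemma integral_over_QRees_alg_Int_RT:
  assumes J: "is_QRees J" and b: "b > 0" and x: "x \<in> RT b"
    and int: "integral_over (QRees_alg J) x"
  shows "integral_over (QRees_alg J \<inter> RT b) x"
proof -
  let ?\<pi> = "restrict_keys (nat_multiples b)"
  obtain n c where c: "\<forall>i<n. c i \<in> QRees_alg J" and eq: "x ^ n + (\<Sum>i<n. c i * x ^ i) = 0"
    using int unfolding integral_over_def by blast
  have "?\<pi> (c i * x ^ i) = ?\<pi> (c i) * x ^ i" if "i < n" for i
    using c that by (intro restrict_keys_mult_RT[OF b] RT_power[OF x]) (auto simp: QRees_alg_iff[OF J])
  moreover have "?\<pi> (x ^ n) = x ^ n"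
    using RT_power[OF x] by (simp add: restrict_keys_id RT_iff_keys)
  moreover have "?\<pi> (x ^ n + (\<Sum>i<n. c i * x ^ i)) = 0"
    by (rule poly_mapping_eqI) (simp add: eq lookup_restrict_keys)
  ultimately have "x ^ n + (\<Sum>i<n. ?\<pi> (c i) * x ^ i) = 0"
    by (simp only: restrict_keys_add restrict_keys_sum cong: sum.cong) simp
  then show ?thesis
    unfolding integral_over_def using restrict_keys_QRees_alg[OF J] c
    by (intro exI[of _ n] exI[of _ "\<lambda>i. ?\<pi> (c i)"]) auto
qed

lemma integral_closure_QRees_alg_RT:
  assumes J: "is_QRees J" and b: "b > 0"
  shows "integral_closure_in (QRees_alg J \<inter> RT b) (RT b) = {x \<in> RT b. integral_over (QRees_alg J) x}"
  using integral_over_QRees_alg_Int_RT[OF J b] integral_over_mono[of "QRees_alg J \<inter> RT b" "QRees_alg J"]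
  unfolding integral_closure_in_def by blast

lemma QRees_alg_integral_over_if_closure_RT_eq:
  assumes J1: "is_QRees J1" and J2: "is_QRees J2" and b: "b > 0"
    and eq: "integral_closure_in (QRees_alg J1 \<inter> RT b) (RT b)
           = integral_closure_in (QRees_alg J2 \<inter> RT b) (RT b)"
    and p: "p \<in> QRees_alg J1"
  shows "integral_over (QRees_alg J2) p"
proof -
  have hom: "integral_over (QRees_alg J2) (Poly_Mapping.single k g)" if k: "k \<ge> 0" and g: "g \<in> J1 k" for k g
  proof -
    obtain m :: nat where m: "m \<ge> 1" "of_nat m * k \<in> nat_multiples b"
      using nat_multiple_exists[OF b k] by blast
    have "Poly_Mapping.single k g ^ m \<in> QRees_alg J1 \<inter> RT b"
      using single_in_QRees_alg[OF J1 _ QRees_power[OF J1 k g]] k m(2)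
      by (simp add: single_power RT_iff_keys)
    then have "Poly_Mapping.single k g ^ m \<in> integral_closure_in (QRees_alg J1 \<inter> RT b) (RT b)"
      using integral_over_mem[OF is_subring_Int[OF is_subring_QRees_alg[OF J1] is_subring_RT]]
      by (simp add: integral_closure_in_def)
    then have "integral_over (QRees_alg J2) (Poly_Mapping.single k g ^ m)"
      unfolding eq integral_closure_QRees_alg_RT[OF J2 b] by blast
    then show ?thesis
      using integral_over_of_power[OF _ m(1)] is_subring_QRees_alg[OF J2]
      unfolding is_subring_def by blast
  qed
  have "integral_over (QRees_alg J2)
      (\<Sum>k\<in>Poly_Mapping.keys p. Poly_Mapping.single k (Poly_Mapping.lookup p k))"
    using p by (intro integral_over_sum[OF is_subring_QRees_alg[OF J2]] hom)
      (auto simp: QRees_alg_iff[OF J1])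
  then show ?thesis by (simp flip: poly_mapping_sum_single)
qed

lemma integral_closure_RT_eq_transfer:
  assumes J1: "is_QRees J1" and J2: "is_QRees J2" and b: "b > 0"
    and eq: "integral_closure_in (QRees_alg J1 \<inter> RT b) (RT b)
           = integral_closure_in (QRees_alg J2 \<inter> RT b) (RT b)"
    and b': "b' > 0"
  shows "integral_closure_in (QRees_alg J1 \<inter> RT b') (RT b')
       = integral_closure_in (QRees_alg J2 \<inter> RT b') (RT b')"
proof -
  have "integral_over (QRees_alg J1) x \<longleftrightarrow> integral_over (QRees_alg J2) x" for x
    using integral_over_trans[OF is_subring_QRees_alg[OF J2] _
          QRees_alg_integral_over_if_closure_RT_eq[OF J1 J2 b eq]]
      integral_over_trans[OF is_subring_QRees_alg[OF J1] _
          QRees_alg_integral_over_if_closure_RT_eq[OF J2 J1 b eq[symmetric]]]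
    by blast
  then show ?thesis
    unfolding integral_closure_QRees_alg_RT[OF J1 b'] integral_closure_QRees_alg_RT[OF J2 b'] by simp
qed

theorem mainTheorem1:
  fixes \<phi> :: "'k::field \<Rightarrow> 'a::comm_ring_1"
    and J1 J2 :: "rat \<Rightarrow> 'a set"
  assumes "noetherian TYPE('a)"
    and "ring_hom_tc \<phi>"
    and "is_QRees J1" and "is_QRees J2"
  shows "(integral_closure_in (QRees_alg J1 \<inter> RT 1) (RT 1)
            = integral_closure_in (QRees_alg J2 \<inter> RT 1) (RT 1)
          \<longleftrightarrow> (\<exists>b>0. integral_closure_in (QRees_alg J1 \<inter> RT b) (RT b)
                   = integral_closure_in (QRees_alg J2 \<inter> RT b) (RT b)))
       \<and> ((\<exists>b>0. integral_closure_in (QRees_alg J1 \<inter> RT b) (RT b)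
                   = integral_closure_in (QRees_alg J2 \<inter> RT b) (RT b))
          \<longleftrightarrow> (\<forall>b>0. integral_closure_in (QRees_alg J1 \<inter> RT b) (RT b)
                   = integral_closure_in (QRees_alg J2 \<inter> RT b) (RT b)))"
proof -
  have "(1::rat) > 0" by simp
  then show ?thesis using integral_closure_RT_eq_transfer[OF assms(3,4)] by blast
qed

end
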